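(* Let $\mathbb{X}$ be an idempotent semifield as described in the context. Let $n,m\geq1$, let $\bm{p}_{j}=(p_{1j},\ldots,p_{nj})^{T}\in\mathbb{X}^{n}$, $j=1,\ldots,m$, be regular vectors, let $w_{1},\ldots,w_{m}$ be positive reals, let $h_{j},d_{j}\in\mathbb{X}\setminus\{\mathbb{0}\}$, let $c_{1},\ldots,c_{n}$ be nonzero reals, let $\bm{B}=(b_{ik})\in\mathbb{X}^{n\times n}$ (entries may equal $\mathbb{0}$), and let $\bm{f}=(f_{i}),\bm{g}=(g_{i})\in\mathbb{X}^{n}$ be regular with $\bm{f}\leq\bm{g}$. Consider the problem of minimizing over regular $\bm{x}=(x_{i})\in\mathbb{X}^{n}$ $$\bigoplus_{1\leq j\leq m}h_{j}(\bm{p}_{j}^{-}\bm{x}\oplus\bm{x}^{-}\bm{p}_{j})^{w_{j}}$$ subject to $\bm{p}_{j}^{-}\bm{x}\oplus\bm{x}^{-}\bm{p}_{j}\leq d_{j}$ ($j=1,\ldots,m$), $b_{ik}x_{k}^{c_{k}}\leq x_{i}^{c_{i}}$ ($i,k=1,\ldots,n$), and $\bm{f}\leq\bm{x}\leq\bm{g}$. Define vectors $\bm{s}=(s_{i})$, $\bm{t}=(t_{i})$ by $$s_{i}=\bigoplus_{1\leq j\leq m}d_{j}^{-|c_{i}|}p_{ij}^{c_{i}}\oplus(f_{i}^{-c_{i}}\oplus g_{i}^{-c_{i}})^{-1},\qquad t_{i}^{-1}=\bigoplus_{1\leq j\leq m}d_{j}^{-|c_{i}|}p_{ij}^{-c_{i}}\oplus(f_{i}^{c_{i}}\oplus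 g_{i}^{c_{i}})^{-1}.$$ Suppose (1) $\mathrm{Tr}(\bm{B})\leq\mathbb{1}$ and (2) $\bm{t}^{-}\bm{B}^{\ast}\bm{s}\leq\mathbb{1}$. Then the minimum value of the problem is $$\theta=\bigoplus_{1\leq i,k\leq n}\bigoplus_{1\leq j,l\leq m}\bigg(h_{j}^{\frac{|c_{i}|w_{l}}{|c_{i}|w_{l}+|c_{k}|w_{j}}}h_{l}^{\frac{|c_{k}|w_{j}}{|c_{i}|w_{l}+|c_{k}|w_{j}}}(p_{ij}^{-c_{i}}b_{ik}^{\ast}p_{kl}^{c_{k}})^{\frac{w_{j}w_{l}}{|c_{i}|w_{l}+|c_{k}|w_{j}}}\oplus h_{j}(p_{ij}^{-c_{i}}b_{ik}^{\ast}s_{k})^{w_{j}/|c_{i}|}\oplus h_{l}(t_{i}^{-1}b_{ik}^{\ast}p_{kl}^{c_{k}})^{w_{l}/|c_{k}|}\bigg),$$ where $b_{ik}^{\ast}$ are the entries of $\bm{B}^{\ast}$. Moreover, with vectors $\bm{q}=(q_{i})$, $\bm{r}=(r_{i})$ given by $$q_{i}=\bigoplus_{1\leq j\leq m}\theta^{-|c_{i}|/w_{j}}h_{j}^{|c_{i}|/w_{j}}p_{ij}^{c_{i}},\qquad r_{i}^{-1}=\bigoplus_{1\leq j\leq m}\theta^{-|c_{i}|/w_{j}}h_{j}^{|c_{i}|/w_{j}}p_{ij}^{-c_{i}},$$ all solution vectors $\bm{x}=(x_{i})$ have entries $x_{i}=y_{i}^{1/c_{i}}$, $i=1,\ldots,n$,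 where $\bm{y}=(y_{i})=\bm{B}^{\ast}\bm{v}$ and the parameter vector $\bm{v}$ satisfies $\bm{q}\oplus\bm{s}\leq\bm{v}\leq((\bm{r}^{-}\oplus\bm{t}^{-})\bm{B}^{\ast})^{-}$.
   Context: An idempotent semifield $(\mathbb{X},\oplus,\otimes,\mathbb{0},\mathbb{1})$ is a set with distinct elements $\mathbb{0},\mathbb{1}$ such that $(\mathbb{X},\oplus,\mathbb{0})$ is a commutative idempotent monoid, $(\mathbb{X}\setminus\{\mathbb{0}\},\otimes,\mathbb{1})$ is an abelian group, and $\otimes$ distributes over $\oplus$. The relation $x\leq y\iff x\oplus y=y$ is assumed to be a total order. The sign $\otimes$ is omitted; $x^{-1}$ is the inverse of $x\neq\mathbb{0}$. Powers $x^{p}$ with real exponents are assumed well defined (with $\mathbb{0}^{p}=\mathbb{0}$ for $p>0$) and obey the usual power rules. Main example: max-plus $(\mathbb{R}\cup\{-\infty\},\max,+,-\infty,0)$ with $x^{p}=px$. Vector/matrix operations use $\oplus,\otimes$; inequalities are componentwise; a vector is regular if it has no $\mathbb{0}$ entries. For nonzero $\bm{x}=(x_{i})$, $\bm{x}^{-}$ is the transposed vector with entries $x_{i}^{-1}$ if $x_{i}\neq\mathbb{0}$ and $\mathbb{0}$ otherwise. $\bm{I}$ is the identity matrix, $\bm{B}^{0}=\bm{I}$, $\bm{B}^{p}=\bm{B}\bm{B}^{p-1}$; $\mathrm{tr}\,\bm{B}=b_{11}\oplus\cdots\oplus b_{nn}$, $\mathrm{Tr}(\bm{B})=\mathrm{tr}\,\bm{B}\oplus\cdots\oplus\mathrm{tr}\,\bm{B}^{n}$,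 and $\bm{B}^{\ast}=\bm{I}\oplus\bm{B}\oplus\cdots\oplus\bm{B}^{n-1}$. *)

theory Defs
  imports Main "HOL.Real"
begin

text \<open>The idempotent addition is max w.r.t. the total order (x <= y iff x + y = y),
  the multiplication is the type-class multiplication, zero is the least element,
  and nonzero elements form an abelian group under multiplication.
  The real power is the parameter rpw.\<close>

class idem_semifield = linorder + comm_monoid_mult + zero + inverse +
  fixes rpw :: "'a \<Rightarrow> real \<Rightarrow> 'a"
  assumes sf_zero_neq_one: "(0::'a) \<noteq> 1"
    and sf_zero_least: "0 \<le> x"
    and sf_mult_zero: "0 * x = 0"
    and sf_right_inverse: "x \<noteq> 0 \<Longrightarrow> x * inverse x = 1"
    and sf_distrib: "x * max y z = max (x * y) (x * z)"
    and rpw_zero_base: "p > 0 \<Longrightarrow> rpw 0 p = 0"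
    and rpw_one: "rpw x 1 = x"
    and rpw_add: "x \<noteq> 0 \<Longrightarrow> rpw x (p + q) = rpw x p * rpw x q"
    and rpw_rpw: "x \<noteq> 0 \<Longrightarrow> rpw (rpw x p) q = rpw x (p * q)"
    and rpw_mult_base: "x \<noteq> 0 \<Longrightarrow> y \<noteq> 0 \<Longrightarrow> rpw (x * y) p = rpw x p * rpw y p"
    and rpw_mono: "p > 0 \<Longrightarrow> x \<le> y \<Longrightarrow> rpw x p \<le> rpw y p"

section \<open>Vectors and matrices (indices 0..n-1, functions on nat)\<close>

definition ssum :: "('b \<Rightarrow> 'a::idem_semifield) \<Rightarrow> 'b set \<Rightarrow> 'a" where
  "ssum f A = Max (insert 0 (f ` A))"

definition dotp :: "nat \<Rightarrow> (nat \<Rightarrow> 'a::idem_semifield) \<Rightarrow> (nat \<Rightarrow> 'a) \<Rightarrow> 'a" where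
  "dotp n x y = ssum (\<lambda>i. x i * y i) {..<n}"

definition mmult :: "nat \<Rightarrow> (nat \<Rightarrow> nat \<Rightarrow> 'a::idem_semifield) \<Rightarrow> (nat \<Rightarrow> nat \<Rightarrow> 'a) \<Rightarrow> nat \<Rightarrow> nat \<Rightarrow> 'a" where
  "mmult n A B i k = ssum (\<lambda>j. A i j * B j k) {..<n}"

definition mvmult :: "nat \<Rightarrow> (nat \<Rightarrow> nat \<Rightarrow> 'a::idem_semifield) \<Rightarrow> (nat \<Rightarrow> 'a) \<Rightarrow> nat \<Rightarrow> 'a" where
  "mvmult n A x i = ssum (\<lambda>k. A i k * x k) {..<n}"

definition vmmult :: "nat \<Rightarrow> (nat \<Rightarrow> 'a::idem_semifield) \<Rightarrow> (nat \<Rightarrow> nat \<Rightarrow> 'a) \<Rightarrow> nat \<Rightarrow> 'a" where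
  "vmmult n x A k = ssum (\<lambda>i. x i * A i k) {..<n}"

definition mid :: "nat \<Rightarrow> nat \<Rightarrow> 'a::idem_semifield" where
  "mid i k = (if i = k then 1 else 0)"

fun mpow :: "nat \<Rightarrow> (nat \<Rightarrow> nat \<Rightarrow> 'a::idem_semifield) \<Rightarrow> nat \<Rightarrow> nat \<Rightarrow> nat \<Rightarrow> 'a" where
  "mpow n B 0 = mid"
| "mpow n B (Suc p) = mmult n B (mpow n B p)"

definition kstar :: "nat \<Rightarrow> (nat \<Rightarrow> nat \<Rightarrow> 'a::idem_semifield) \<Rightarrow> nat \<Rightarrow> nat \<Rightarrow> 'a" where
  "kstar n B i k = ssum (\<lambda>p. mpow n B p i k) {..<n}"

definition mtr :: "nat \<Rightarrow> (nat \<Rightarrow> nat \<Rightarrow> 'a::idem_semifield) \<Rightarrow> 'a" where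
  "mtr n B = ssum (\<lambda>i. B i i) {..<n}"

definition Tr :: "nat \<Rightarrow> (nat \<Rightarrow> nat \<Rightarrow> 'a::idem_semifield) \<Rightarrow> 'a" where
  "Tr n B = ssum (\<lambda>p. mtr n (mpow n B p)) {1..n}"

definition vconj :: "(nat \<Rightarrow> 'a::idem_semifield) \<Rightarrow> nat \<Rightarrow> 'a" where
  "vconj x i = (if x i = 0 then 0 else inverse (x i))"

definition regular :: "nat \<Rightarrow> (nat \<Rightarrow> 'a::idem_semifield) \<Rightarrow> bool" where
  "regular n x \<longleftrightarrow> (\<forall>i<n. x i \<noteq> 0)"

text \<open>P i j is the i-th entry of p_j. The term p_j^- x + x^- p_j.\<close>
definition dev :: "nat \<Rightarrow> (nat \<Rightarrow> nat \<Rightarrow> 'a::idem_semifield) \<Rightarrow> nat \<Rightarrow> (nat \<Rightarrow> 'a) \<Rightarrow> 'a" where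
  "dev n P j x = max (dotp n (vconj (\<lambda>i. P i j)) x) (dotp n (vconj x) (\<lambda>i. P i j))"

definition objective :: "nat \<Rightarrow> nat \<Rightarrow> (nat \<Rightarrow> nat \<Rightarrow> 'a::idem_semifield) \<Rightarrow> (nat \<Rightarrow> real)
    \<Rightarrow> (nat \<Rightarrow> 'a) \<Rightarrow> (nat \<Rightarrow> 'a) \<Rightarrow> 'a" where
  "objective n m P w h x = ssum (\<lambda>j. h j * rpw (dev n P j x) (w j)) {..<m}"

definition feasible :: "nat \<Rightarrow> nat \<Rightarrow> (nat \<Rightarrow> nat \<Rightarrow> 'a::idem_semifield) \<Rightarrow> (nat \<Rightarrow> 'a)
    \<Rightarrow> (nat \<Rightarrow> real) \<Rightarrow> (nat \<Rightarrow> nat \<Rightarrow> 'a) \<Rightarrow> (nat \<Rightarrow> 'a) \<Rightarrow> (nat \<Rightarrow> 'a) \<Rightarrow> (nat \<Rightarrow> 'a) \<Rightarrow> bool" where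
  "feasible n m P d c B f g x \<longleftrightarrow>
     regular n x \<and>
     (\<forall>j<m. dev n P j x \<le> d j) \<and>
     (\<forall>i<n. \<forall>k<n. B i k * rpw (x k) (c k) \<le> rpw (x i) (c i)) \<and>
     (\<forall>i<n. f i \<le> x i \<and> x i \<le> g i)"

end

theory Submission
  imports Defs
begin

text \<open>
  Put \<open>y\<^sub>i = x\<^sub>i\<^bsup>c\<^sub>i\<^esup>\<close>. The constraints \<open>b\<^sub>i\<^sub>k x\<^sub>k\<^bsup>c\<^sub>k\<^esup> \<le> x\<^sub>i\<^bsup>c\<^sub>i\<^esup>\<close> read \<open>B y \<le> y\<close>, and every other
  constraint, as well as every sublevel set \<open>objective \<le> \<theta>'\<close>, becomes a pair of bounds
  \<open>a \<le> y\<close>, \<open>b y \<le> 1\<close>. When \<open>Tr B \<le> 1\<close>, walks of length \<open>n\<close> can be shortened, so \<open>B\<^sup>*\<close>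
  absorbs multiplication by \<open>B\<close>; the solutions of such a system are then exactly \<open>y = B\<^sup>* v\<close>
  with \<open>a \<le> v \<le> (b\<^sup>- B\<^sup>*)\<^sup>-\<close>, and one exists iff \<open>b\<^sub>i B\<^sup>*\<^sub>i\<^sub>k a\<^sub>k \<le> 1\<close> for all \<open>i, k\<close>.
  For the sublevel set at level \<open>\<theta>'\<close> these inequalities unfold, term by term, to \<open>\<theta> \<le> \<theta>'\<close>
  (one family of them being hypothesis (2)). So \<open>\<theta>\<close> is the minimum, and the optimal points
  are the sublevel set at \<open>\<theta>\<close>.
\<close>

section \<open>Arithmetic in an idempotent semifield\<close>

declare sf_zero_least [simp] sf_mult_zero [simp]

lemma sf_mult_0_right [simp]: "(x::'a::idem_semifield) * 0 = 0"
  using sf_mult_zero[of x] by (simp add: mult.commute)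

lemma sf_le_0_iff [simp]: "(x::'a::idem_semifield) \<le> 0 \<longleftrightarrow> x = 0"
  using sf_zero_least[of x] by (auto intro: order.antisym)

lemma sf_nonzero_le: "(a::'a::idem_semifield) \<le> b \<Longrightarrow> a \<noteq> 0 \<Longrightarrow> b \<noteq> 0"
  by auto

lemma sf_max_eq_0_iff [simp]: "max (a::'a::idem_semifield) b = 0 \<longleftrightarrow> a = 0 \<and> b = 0"
  by (metis max.cobounded1 max.cobounded2 max.idem sf_le_0_iff)

lemma sf_one_neq_zero [simp]: "(1::'a::idem_semifield) \<noteq> 0"
  using sf_zero_neq_one by metis

lemma sf_mult_left_mono: "(a::'a::idem_semifield) \<le> b \<Longrightarrow> c * a \<le> c * b"
  by (metis max.absorb2 max.cobounded1 sf_distrib)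

lemma sf_mult_right_mono: "(a::'a::idem_semifield) \<le> b \<Longrightarrow> a * c \<le> b * c"
  using sf_mult_left_mono[of a b c] by (simp add: mult.commute)

lemma sf_max_mult_distrib: "max (a::'a::idem_semifield) b * c = max (a * c) (b * c)"
  using sf_distrib[of c a b] by (simp add: mult.commute)

lemma sf_left_inverse: "(x::'a::idem_semifield) \<noteq> 0 \<Longrightarrow> inverse x * x = 1"
  using sf_right_inverse by (simp add: mult.commute)

lemma sf_mult_eq_0_iff [simp]: "(x::'a::idem_semifield) * y = 0 \<longleftrightarrow> x = 0 \<or> y = 0"
proof (intro iffI)
  assume "x * y = 0"
  then have "inverse x * (x * y) = 0" by simp
  then show "x = 0 \<or> y = 0" by (metis mult.assoc mult_1_left sf_left_inverse)
qed auto

lemma sf_inverse_unique: "(a::'a::idem_semifield) * b = 1 \<Longrightarrow> inverse a = b"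
  by (metis mult.assoc mult.commute mult_1_right sf_mult_0_right sf_one_neq_zero sf_right_inverse)

lemma sf_inverse_nonzero: "(x::'a::idem_semifield) \<noteq> 0 \<Longrightarrow> inverse x \<noteq> 0"
  using sf_right_inverse[of x] by (metis sf_mult_0_right sf_one_neq_zero)

lemma sf_inverse_inverse [simp]: "(x::'a::idem_semifield) \<noteq> 0 \<Longrightarrow> inverse (inverse x) = x"
  by (rule sf_inverse_unique) (simp add: sf_left_inverse)

lemma sf_inverse_mult:
  "(x::'a::idem_semifield) \<noteq> 0 \<Longrightarrow> y \<noteq> 0 \<Longrightarrow> inverse (x * y) = inverse x * inverse y"
  by (rule sf_inverse_unique) (metis mult.assoc mult.left_commute mult_1_right sf_right_inverse)

lemma sf_mult_le_iff_le_inverse_mult: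
  assumes "(c::'a::idem_semifield) \<noteq> 0"
  shows "c * a \<le> b \<longleftrightarrow> a \<le> inverse c * b"
proof
  assume "c * a \<le> b"
  then have "inverse c * (c * a) \<le> inverse c * b" by (rule sf_mult_left_mono)
  then show "a \<le> inverse c * b" using assms by (simp add: mult.assoc[symmetric] sf_left_inverse)
next
  assume "a \<le> inverse c * b"
  then have "c * a \<le> c * (inverse c * b)" by (rule sf_mult_left_mono)
  then show "c * a \<le> b" using assms by (simp add: mult.assoc[symmetric] sf_right_inverse)
qed

lemma sf_le_mult_iff_inverse_mult_le:
  assumes "(c::'a::idem_semifield) \<noteq> 0"
  shows "b \<le> c * a \<longleftrightarrow> inverse c * b \<le> a"
proof
  assume "b \<le> c * a"
  then have "inverse c * b \<le> inverse c * (c * a)" by (rule sf_mult_left_mono)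
  then show "inverse c * b \<le> a" using assms by (simp add: mult.assoc[symmetric] sf_left_inverse)
next
  assume "inverse c * b \<le> a"
  then have "c * (inverse c * b) \<le> c * a" by (rule sf_mult_left_mono)
  then show "b \<le> c * a" using assms by (simp add: mult.assoc[symmetric] sf_right_inverse)
qed

lemma sf_le_inverse_iff: "(c::'a::idem_semifield) \<noteq> 0 \<Longrightarrow> a \<le> inverse c \<longleftrightarrow> c * a \<le> 1"
  using sf_mult_le_iff_le_inverse_mult[of c a 1] by simp

lemma sf_le_iff_inverse_mult_le_one:
  "(y::'a::idem_semifield) \<noteq> 0 \<Longrightarrow> x \<le> y \<longleftrightarrow> inverse y * x \<le> 1"
  using sf_le_inverse_iff[OF sf_inverse_nonzero, of y x] by simp

lemma sf_mult_le_cancel_left: "(c::'a::idem_semifield) \<noteq> 0 \<Longrightarrow> c * a \<le> c * b \<longleftrightarrow> a \<le> b"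
  by (simp add: sf_mult_le_iff_le_inverse_mult mult.assoc[symmetric] sf_left_inverse)

lemma sf_inverse_le_inverse_iff:
  assumes x: "(x::'a::idem_semifield) \<noteq> 0" and y: "y \<noteq> 0"
  shows "inverse x \<le> inverse y \<longleftrightarrow> y \<le> x"
proof -
  have "inverse x \<le> inverse y \<longleftrightarrow> y * inverse x \<le> 1"
    using sf_le_inverse_iff[OF y] by simp
  also have "\<dots> \<longleftrightarrow> inverse x * y \<le> inverse x * x"
    using x by (simp add: mult.commute sf_right_inverse)
  also have "\<dots> \<longleftrightarrow> y \<le> x" using sf_mult_le_cancel_left[OF sf_inverse_nonzero[OF x]] .
  finally show ?thesis .
qed

lemma rpw_zero_exp:
  assumes "(x::'a::idem_semifield) \<noteq> 0"
  shows "rpw x 0 = 1"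
proof -
  have "x = x * rpw x 0" using rpw_add[OF assms, of 1 0] by (simp add: rpw_one)
  then have "inverse x * x = inverse x * x * rpw x 0" by (simp add: mult.assoc)
  then show ?thesis using assms by (simp add: sf_left_inverse)
qed

lemma rpw_nonzero: "(x::'a::idem_semifield) \<noteq> 0 \<Longrightarrow> rpw x p \<noteq> 0"
  by (metis add.right_inverse sf_mult_zero sf_one_neq_zero rpw_zero_exp rpw_add)

lemma rpw_minus: "(x::'a::idem_semifield) \<noteq> 0 \<Longrightarrow> rpw x (- p) = inverse (rpw x p)"
  by (metis add.right_inverse sf_inverse_unique rpw_zero_exp rpw_add)

lemma rpw_one_base [simp]: "rpw 1 p = (1::'a::idem_semifield)"
proof -
  have "rpw 1 p = rpw 1 p * (rpw 1 p::'a)" using rpw_mult_base[of 1 1 p] by simp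
  then have "inverse (rpw 1 p) * rpw 1 p = inverse (rpw 1 p) * rpw 1 p * (rpw 1 p::'a)"
    by (simp add: mult.assoc)
  then show ?thesis using sf_left_inverse[OF rpw_nonzero[OF sf_one_neq_zero, of p]] by (metis mult_1_left)
qed

lemma rpw_inverse: "(x::'a::idem_semifield) \<noteq> 0 \<Longrightarrow> rpw (inverse x) p = inverse (rpw x p)"
  by (metis sf_inverse_nonzero sf_inverse_unique rpw_mult_base rpw_one_base sf_right_inverse)

lemma rpw_inverse_mult_minus:
  assumes "(h::'a::idem_semifield) \<noteq> 0" and "\<theta> \<noteq> 0"
  shows "rpw (inverse h * \<theta>) (- e) = rpw \<theta> (- e) * rpw h e"
proof -
  have "rpw (inverse h * \<theta>) (- e) = inverse (rpw h (- e)) * rpw \<theta> (- e)"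
    using assms by (simp add: rpw_mult_base sf_inverse_nonzero rpw_inverse)
  also have "inverse (rpw h (- e)) = rpw h e"
    using assms(1) rpw_minus[of h e] by (simp add: rpw_nonzero)
  finally show ?thesis by (simp add: mult.commute)
qed

lemma rpw_mult_pos: "p > 0 \<Longrightarrow> rpw ((x::'a::idem_semifield) * y) p = rpw x p * rpw y p"
  by (metis sf_mult_zero sf_mult_0_right rpw_mult_base rpw_zero_base)

lemma rpw_rpw_pos: "p > 0 \<Longrightarrow> q > 0 \<Longrightarrow> rpw (rpw (x::'a::idem_semifield) p) q = rpw x (p * q)"
  by (metis mult_pos_pos rpw_rpw rpw_zero_base)

lemma rpw_le_rpw_iff:
  assumes "p > 0"
  shows "rpw (x::'a::idem_semifield) p \<le> rpw y p \<longleftrightarrow> x \<le> y"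
proof
  assume "rpw x p \<le> rpw y p"
  then have "rpw (rpw x p) (1/p) \<le> rpw (rpw y p) (1/p)"
    using rpw_mono[of "1/p"] assms by simp
  then show "x \<le> y"
    using assms by (simp add: rpw_rpw_pos rpw_one)
qed (rule rpw_mono[OF assms])

lemma rpw_le_rpw_iff_neg:
  assumes "p < 0" and "(x::'a::idem_semifield) \<noteq> 0" and "y \<noteq> 0"
  shows "rpw x p \<le> rpw y p \<longleftrightarrow> y \<le> x"
proof -
  have "rpw x p \<le> rpw y p \<longleftrightarrow> inverse (rpw x (-p)) \<le> inverse (rpw y (-p))"
    using rpw_minus[of x "-p"] rpw_minus[of y "-p"] assms by simp
  also have "\<dots> \<longleftrightarrow> y \<le> x"
    using assms by (simp add: sf_inverse_le_inverse_iff rpw_nonzero rpw_le_rpw_iff)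
  finally show ?thesis .
qed

lemma rpw_eq_iff_inverse_exp:
  assumes "c \<noteq> 0" and "(x::'a::idem_semifield) \<noteq> 0" and "y \<noteq> 0"
  shows "rpw x c = y \<longleftrightarrow> x = rpw y (1 / c)"
  using assms by (auto simp: rpw_rpw rpw_one)

lemma ssum_empty [simp]: "ssum f {} = (0::'a::idem_semifield)"
  by (simp add: ssum_def)

lemma ssum_insert:
  "finite A \<Longrightarrow> ssum f (insert a A) = max (f a) (ssum (f::_ \<Rightarrow> 'a::idem_semifield) A)"
proof -
  assume "finite A"
  have "insert 0 (f ` insert a A) = insert (f a) (insert 0 (f ` A))" by auto
  then show ?thesis unfolding ssum_def using \<open>finite A\<close> by simp
qed

lemma ssum_upper: "finite A \<Longrightarrow> a \<in> A \<Longrightarrow> (f a::'a::idem_semifield) \<le> ssum f A"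
  by (simp add: ssum_def)

lemma ssum_le_iff: "finite A \<Longrightarrow> ssum f A \<le> (z::'a::idem_semifield) \<longleftrightarrow> (\<forall>a\<in>A. f a \<le> z)"
  by (simp add: ssum_def)

lemma ssum_nonzero: "finite A \<Longrightarrow> a \<in> A \<Longrightarrow> (f a::'a::idem_semifield) \<noteq> 0 \<Longrightarrow> ssum f A \<noteq> 0"
  by (metis ssum_upper sf_le_0_iff)

lemma ssum_eq_0_or_attained:
  assumes "finite A"
  shows "ssum f A = (0::'a::idem_semifield) \<or> (\<exists>a\<in>A. ssum f A = f a)"
proof -
  have "Max (insert 0 (f ` A)) \<in> insert 0 (f ` A)" using assms by (intro Max_in) auto
  then show ?thesis by (auto simp: ssum_def)
qed

lemma ssum_cong:
  "A = C \<Longrightarrow> (\<And>x. x \<in> C \<Longrightarrow> f x = g x) \<Longrightarrow> ssum f A = (ssum g C::'a::idem_semifield)"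
  unfolding ssum_def by (metis image_cong)

lemma ssum_mult_left: "finite A \<Longrightarrow> (c::'a::idem_semifield) * ssum f A = ssum (\<lambda>a. c * f a) A"
  by (induct A rule: finite_induct) (simp_all add: ssum_insert sf_distrib)

lemma ssum_mult_right: "finite A \<Longrightarrow> ssum f A * (c::'a::idem_semifield) = ssum (\<lambda>a. f a * c) A"
  using ssum_mult_left[of A c f] by (simp add: mult.commute)

section \<open>Walks and the Kleene star\<close>

lemma mpow_Suc_entry: "mpow n B (Suc p) i k = ssum (\<lambda>j. B i j * mpow n B p j k) {..<n}"
  by (simp add: mmult_def)

definition walk_weight :: "(nat \<Rightarrow> nat \<Rightarrow> 'a::idem_semifield) \<Rightarrow> (nat \<Rightarrow> nat) \<Rightarrow> nat \<Rightarrow> nat \<Rightarrow> 'a"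
  where "walk_weight B \<nu> a b = (\<Prod>t\<in>{a..<b}. B (\<nu> t) (\<nu> (Suc t)))"

lemma walk_weight_split:
  "a \<le> b \<Longrightarrow> b \<le> c \<Longrightarrow> walk_weight B \<nu> a c = walk_weight B \<nu> a b * walk_weight B \<nu> b c"
  unfolding walk_weight_def by (simp add: prod.atLeastLessThan_concat)

lemma walk_weight_shift: "walk_weight B \<nu> (a + L) (b + L) = walk_weight B (\<lambda>t. \<nu> (t + L)) a b"
  unfolding walk_weight_def using prod.shift_bounds_nat_ivl[of "\<lambda>t. B (\<nu> t) (\<nu> (Suc t))" a L b]
  by simp

lemma walk_weight_Suc_left:
  "walk_weight B \<nu> 0 (Suc p) = B (\<nu> 0) (\<nu> 1) * walk_weight B (\<lambda>t. \<nu> (Suc t)) 0 p"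
  unfolding walk_weight_def atLeast0LessThan prod.lessThan_Suc_shift by simp

lemma walk_weight_le_mpow:
  assumes "\<nu> 0 = i" and "\<nu> p = k" and "\<forall>t\<le>p. \<nu> t < n"
  shows "walk_weight B \<nu> 0 p \<le> mpow n B p i k"
  using assms
proof (induction p arbitrary: \<nu> i)
  case 0
  then show ?case by (simp add: walk_weight_def mid_def)
next
  case (Suc p)
  have "walk_weight B \<nu> 0 (Suc p) = B i (\<nu> 1) * walk_weight B (\<lambda>t. \<nu> (Suc t)) 0 p"
    using Suc.prems by (simp add: walk_weight_Suc_left)
  also have "\<dots> \<le> B i (\<nu> 1) * mpow n B p (\<nu> 1) k"
    using Suc.IH[of "\<lambda>t. \<nu> (Suc t)" "\<nu> 1"] Suc.prems by (auto intro!: sf_mult_left_mono)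
  also have "\<dots> \<le> mpow n B (Suc p) i k"
    unfolding mpow_Suc_entry using Suc.prems
    by (intro ssum_upper[where f = "\<lambda>j. B i j * mpow n B p j k"]) auto
  finally show ?case .
qed

lemma mpow_attained_by_walk:
  assumes "i < n" and "mpow n B p i k \<noteq> (0::'a::idem_semifield)"
  shows "\<exists>\<nu>. \<nu> 0 = i \<and> \<nu> p = k \<and> (\<forall>t\<le>p. \<nu> t < n) \<and> mpow n B p i k \<le> walk_weight B \<nu> 0 p"
  using assms
proof (induction p arbitrary: i)
  case 0
  then have "i = k" by (simp add: mid_def split: if_splits)
  with 0 show ?case by (intro exI[of _ "\<lambda>_. i"]) (simp add: walk_weight_def mid_def)
next
  case (Suc p)
  obtain j where j: "j < n" "mpow n B (Suc p) i k = B i j * mpow n B p j k"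
    using ssum_eq_0_or_attained[of "{..<n}" "\<lambda>j. B i j * mpow n B p j k"] Suc.prems
    unfolding mpow_Suc_entry by auto
  with Suc obtain \<nu> where \<nu>: "\<nu> 0 = j" "\<nu> p = k" "\<forall>t\<le>p. \<nu> t < n"
      "mpow n B p j k \<le> walk_weight B \<nu> 0 p"
    by auto
  define \<mu> where "\<mu> t = (if t = 0 then i else \<nu> (t - 1))" for t
  have "walk_weight B \<mu> 0 (Suc p) = B i j * walk_weight B \<nu> 0 p"
    by (simp add: walk_weight_Suc_left \<mu>_def \<nu>(1))
  then have "mpow n B (Suc p) i k \<le> walk_weight B \<mu> 0 (Suc p)"
    unfolding j(2) using \<nu>(4) by (simp add: sf_mult_left_mono)
  moreover have "\<mu> 0 = i" "\<mu> (Suc p) = k" "\<forall>t\<le>Suc p. \<mu> t < n"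
    using \<nu> Suc.prems(1) by (auto simp: \<mu>_def)
  ultimately show ?case by blast
qed

lemma repeated_value_atMost:
  fixes \<nu> :: "nat \<Rightarrow> nat"
  assumes "\<forall>t\<le>n. \<nu> t < n"
  shows "\<exists>a b. a < b \<and> b \<le> n \<and> \<nu> a = \<nu> b"
proof -
  have "\<not> inj_on \<nu> {..n}"
  proof
    assume "inj_on \<nu> {..n}"
    then have "card {..n} \<le> card {..<n}" using assms by (intro card_inj_on_le) auto
    then show False by simp
  qed
  then obtain a b where "a \<le> n" "b \<le> n" "a \<noteq> b" "\<nu> a = \<nu> b" unfolding inj_on_def by auto
  then show ?thesis by (metis nat_neq_iff)
qed

lemma cycle_weight_le_Tr:
  assumes "a < b" and "b \<le> a + n" and "\<nu> a = \<nu> b" and "\<forall>t\<le>b. \<nu> t < n"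
  shows "walk_weight B \<nu> a b \<le> Tr n B"
proof -
  define L where "L = b - a"
  have L: "0 < L" "L \<le> n" "b = L + a" using assms by (auto simp: L_def)
  have "walk_weight B \<nu> a b = walk_weight B (\<lambda>t. \<nu> (t + a)) 0 L"
    using walk_weight_shift[of B \<nu> 0 a L] L by simp
  also have "\<dots> \<le> mpow n B L (\<nu> a) (\<nu> a)"
    using assms L by (intro walk_weight_le_mpow) auto
  also have "\<dots> \<le> mtr n (mpow n B L)"
    unfolding mtr_def using assms by (intro ssum_upper[where f = "\<lambda>i. mpow n B L i i"]) auto
  also have "\<dots> \<le> Tr n B"
    unfolding Tr_def using L by (intro ssum_upper[where f = "\<lambda>p. mtr n (mpow n B p)"]) auto
  finally show ?thesis .
qed

text \<open>A walk of length \<open>n\<close> on \<open>n\<close> vertices repeats a vertex; cutting out the cycle in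
  between loses a factor of weight at most \<open>Tr B \<le> 1\<close>.\<close>

lemma mpow_dim_le_lower_power:
  fixes B :: "nat \<Rightarrow> nat \<Rightarrow> 'a::idem_semifield"
  assumes Tr: "Tr n B \<le> 1" and "i < n" and "k < n"
  shows "\<exists>p<n. mpow n B n i k \<le> mpow n B p i k"
proof (cases "mpow n B n i k = 0")
  case True
  then show ?thesis using assms by auto
next
  case False
  then obtain \<nu> where \<nu>: "\<nu> 0 = i" "\<nu> n = k" "\<forall>t\<le>n. \<nu> t < n"
      "mpow n B n i k \<le> walk_weight B \<nu> 0 n"
    using mpow_attained_by_walk assms by blast
  then obtain a b where ab: "a < b" "b \<le> n" "\<nu> a = \<nu> b"
    using repeated_value_atMost by blast
  define L where "L = b - a"
  define \<mu> where "\<mu> t = (if t \<le> a then \<nu> t else \<nu> (t + L))" for t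
  have L: "0 < L" "b = a + L" "a \<le> n - L" using ab by (auto simp: L_def)
  have "mpow n B n i k \<le> walk_weight B \<nu> 0 a * walk_weight B \<nu> a b * walk_weight B \<nu> b n"
    using \<nu>(4) ab walk_weight_split[of 0 a b B \<nu>] walk_weight_split[of 0 b n B \<nu>] by simp
  also have "\<dots> \<le> walk_weight B \<nu> 0 a * 1 * walk_weight B \<nu> b n"
    using cycle_weight_le_Tr[of a b n \<nu> B] ab \<nu>(3) Tr
    by (intro sf_mult_right_mono sf_mult_left_mono) auto
  also have "\<dots> = walk_weight B \<nu> 0 a * walk_weight B (\<lambda>t. \<nu> (t + L)) a (n - L)"
    using walk_weight_shift[of B \<nu> a L "n - L"] L ab by simp
  also have "\<dots> = walk_weight B \<mu> 0 a * walk_weight B \<mu> a (n - L)"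
    unfolding walk_weight_def using L ab
    by (intro arg_cong2[where f = "(*)"] prod.cong) (auto simp: \<mu>_def)
  also have "\<dots> = walk_weight B \<mu> 0 (n - L)"
    using walk_weight_split[of 0 a "n - L" B \<mu>] L by simp
  also have "\<dots> \<le> mpow n B (n - L) i k"
    using \<nu> L ab by (intro walk_weight_le_mpow) (auto simp: \<mu>_def)
  finally show ?thesis using L ab by (intro exI[of _ "n - L"]) auto
qed

lemma one_le_kstar_diag: "i < n \<Longrightarrow> (1::'a::idem_semifield) \<le> kstar n B i i"
  unfolding kstar_def using ssum_upper[of "{..<n}" 0 "\<lambda>p. mpow n B p i i"] by (simp add: mid_def)

lemma mpow_le_kstar: "p < n \<Longrightarrow> mpow n B p i k \<le> (kstar n B i k::'a::idem_semifield)"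
  unfolding kstar_def by (rule ssum_upper[where f = "\<lambda>p. mpow n B p i k"]) auto

lemma mult_kstar_le_kstar:
  fixes B :: "nat \<Rightarrow> nat \<Rightarrow> 'a::idem_semifield"
  assumes Tr: "Tr n B \<le> 1" and "i < n" and "j < n" and "k < n"
  shows "B i j * kstar n B j k \<le> kstar n B i k"
proof -
  have "B i j * mpow n B p j k \<le> kstar n B i k" if p: "p < n" for p
  proof -
    have "B i j * mpow n B p j k \<le> mpow n B (Suc p) i k"
      unfolding mpow_Suc_entry using assms
      by (intro ssum_upper[where f = "\<lambda>j. B i j * mpow n B p j k"]) auto
    also have "\<dots> \<le> kstar n B i k"
    proof (cases "Suc p < n")
      case True
      then show ?thesis by (rule mpow_le_kstar)
    next
      case False
      with p have "Suc p = n" by simp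
      with mpow_dim_le_lower_power[OF Tr \<open>i < n\<close> \<open>k < n\<close>] show ?thesis
        using mpow_le_kstar order_trans by metis
    qed
    finally show ?thesis .
  qed
  then show ?thesis
    unfolding kstar_def by (simp add: ssum_mult_left ssum_le_iff)
qed

lemma mpow_mult_le_of_subeigen:
  fixes B :: "nat \<Rightarrow> nat \<Rightarrow> 'a::idem_semifield"
  assumes y: "\<forall>i<n. \<forall>k<n. B i k * y k \<le> y i" and "i < n" and "k < n"
  shows "mpow n B p i k * y k \<le> y i"
  using \<open>i < n\<close>
proof (induction p arbitrary: i)
  case 0
  then show ?case by (simp add: mid_def)
next
  case (Suc p)
  have "B i j * mpow n B p j k * y k \<le> y i" if j: "j < n" for j
  proof -
    have "B i j * mpow n B p j k * y k \<le> B i j * y j"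
      using Suc.IH[OF j] by (simp add: mult.assoc sf_mult_left_mono)
    also have "\<dots> \<le> y i" using y Suc.prems j by blast
    finally show ?thesis .
  qed
  then show ?case unfolding mpow_Suc_entry by (simp add: ssum_mult_right ssum_le_iff)
qed

lemma kstar_mult_le_of_subeigen:
  fixes B :: "nat \<Rightarrow> nat \<Rightarrow> 'a::idem_semifield"
  assumes "\<forall>i<n. \<forall>k<n. B i k * y k \<le> y i" and "i < n" and "k < n"
  shows "kstar n B i k * y k \<le> y i"
  unfolding kstar_def using mpow_mult_le_of_subeigen[OF assms]
  by (simp add: ssum_mult_right ssum_le_iff)

lemma le_mvmult_kstar:
  fixes B :: "nat \<Rightarrow> nat \<Rightarrow> 'a::idem_semifield"
  assumes "i < n"
  shows "v i \<le> mvmult n (kstar n B) v i"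
proof -
  have "v i \<le> kstar n B i i * v i"
    using one_le_kstar_diag[OF assms, of B] sf_mult_right_mono by fastforce
  also have "\<dots> \<le> mvmult n (kstar n B) v i"
    unfolding mvmult_def using assms by (intro ssum_upper[where f = "\<lambda>k. kstar n B i k * v k"]) auto
  finally show ?thesis .
qed

lemma mvmult_kstar_eq_of_subeigen:
  fixes B :: "nat \<Rightarrow> nat \<Rightarrow> 'a::idem_semifield"
  assumes "\<forall>i<n. \<forall>k<n. B i k * y k \<le> y i" and "i < n"
  shows "mvmult n (kstar n B) y i = y i"
proof (rule order.antisym)
  show "mvmult n (kstar n B) y i \<le> y i"
    unfolding mvmult_def using kstar_mult_le_of_subeigen[OF assms(1)] assms(2)
    by (simp add: ssum_le_iff)
qed (rule le_mvmult_kstar[OF assms(2)])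

lemma mvmult_kstar_subeigen:
  fixes B :: "nat \<Rightarrow> nat \<Rightarrow> 'a::idem_semifield"
  assumes Tr: "Tr n B \<le> 1" and "i < n" and "k < n"
  shows "B i k * mvmult n (kstar n B) v k \<le> mvmult n (kstar n B) v i"
proof -
  have "B i k * (kstar n B k l * v l) \<le> mvmult n (kstar n B) v i" if l: "l < n" for l
  proof -
    have "B i k * (kstar n B k l * v l) \<le> kstar n B i l * v l"
      using mult_kstar_le_kstar[OF Tr assms(2,3) l] by (simp add: mult.assoc[symmetric] sf_mult_right_mono)
    also have "\<dots> \<le> mvmult n (kstar n B) v i"
      unfolding mvmult_def using l by (intro ssum_upper[where f = "\<lambda>l. kstar n B i l * v l"]) auto
    finally show ?thesis .
  qed
  then show ?thesis unfolding mvmult_def by (simp add: ssum_mult_left ssum_le_iff)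
qed

section \<open>Subeigenvectors with two-sided bounds\<close>

lemma subeigen_bounds_imp_kstar_le_one:
  fixes B :: "nat \<Rightarrow> nat \<Rightarrow> 'a::idem_semifield"
  assumes "\<forall>i<n. \<forall>k<n. B i k * y k \<le> y i" and "\<forall>i<n. a i \<le> y i \<and> b i * y i \<le> 1"
    and "i < n" and "k < n"
  shows "b i * kstar n B i k * a k \<le> 1"
proof -
  have "b i * kstar n B i k * a k \<le> b i * (kstar n B i k * y k)"
    using assms(2,4) by (simp add: mult.assoc sf_mult_left_mono)
  also have "\<dots> \<le> b i * y i"
    using kstar_mult_le_of_subeigen[OF assms(1,3,4)] by (rule sf_mult_left_mono)
  also have "\<dots> \<le> 1" using assms(2,3) by blast
  finally show ?thesis .
qed

text \<open>The condition on \<open>v\<close> besides \<open>a \<le> v\<close> is \<open>v \<le> (b\<^sup>- B\<^sup>*)\<^sup>-\<close>.\<close>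

lemma subeigen_bounds_iff:
  fixes B :: "nat \<Rightarrow> nat \<Rightarrow> 'a::idem_semifield"
  assumes Tr: "Tr n B \<le> 1"
  shows "(\<forall>i<n. \<forall>k<n. B i k * y k \<le> y i) \<and> (\<forall>i<n. a i \<le> y i \<and> b i * y i \<le> 1) \<longleftrightarrow>
    (\<exists>v. (\<forall>i<n. a i \<le> v i \<and> (\<forall>k<n. b k * kstar n B k i * v i \<le> 1))
       \<and> (\<forall>i<n. y i = mvmult n (kstar n B) v i))"
proof
  assume y: "(\<forall>i<n. \<forall>k<n. B i k * y k \<le> y i) \<and> (\<forall>i<n. a i \<le> y i \<and> b i * y i \<le> 1)"
  then have "\<forall>i<n. y i \<le> y i \<and> b i * y i \<le> 1" by simp
  with y show "\<exists>v. (\<forall>i<n. a i \<le> v i \<and> (\<forall>k<n. b k * kstar n B k i * v i \<le> 1))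
       \<and> (\<forall>i<n. y i = mvmult n (kstar n B) v i)"
    by (intro exI[of _ y]) (metis subeigen_bounds_imp_kstar_le_one mvmult_kstar_eq_of_subeigen)
next
  assume "\<exists>v. (\<forall>i<n. a i \<le> v i \<and> (\<forall>k<n. b k * kstar n B k i * v i \<le> 1))
       \<and> (\<forall>i<n. y i = mvmult n (kstar n B) v i)"
  then obtain v where v: "\<forall>i<n. a i \<le> v i \<and> (\<forall>k<n. b k * kstar n B k i * v i \<le> 1)"
    and y: "\<forall>i<n. y i = mvmult n (kstar n B) v i"
    by blast
  have "\<forall>i<n. \<forall>k<n. B i k * y k \<le> y i"
    using mvmult_kstar_subeigen[OF Tr] y by simp
  moreover have "a i \<le> y i" if "i < n" for i
    using v y le_mvmult_kstar[OF that, of v B] that by (metis order_trans)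
  moreover have "b i * y i \<le> 1" if "i < n" for i
    using v y that by (simp add: mvmult_def ssum_mult_left ssum_le_iff mult.assoc[symmetric])
  ultimately show "(\<forall>i<n. \<forall>k<n. B i k * y k \<le> y i) \<and> (\<forall>i<n. a i \<le> y i \<and> b i * y i \<le> 1)"
    by blast
qed

lemma le_vconj_vmmult_kstar_iff:
  fixes B :: "nat \<Rightarrow> nat \<Rightarrow> 'a::idem_semifield"
  assumes "i < n" and "b i \<noteq> 0"
  shows "z \<le> vconj (vmmult n b (kstar n B)) i \<longleftrightarrow> (\<forall>k<n. b k * kstar n B k i * z \<le> 1)"
proof -
  have "b i * kstar n B i i \<le> vmmult n b (kstar n B) i"
    unfolding vmmult_def using assms(1) by (intro ssum_upper[where f = "\<lambda>k. b k * kstar n B k i"]) auto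
  moreover have "b i * kstar n B i i \<noteq> 0"
    using assms one_le_kstar_diag[OF assms(1), of B] by auto
  ultimately have "vmmult n b (kstar n B) i \<noteq> 0" by (rule sf_nonzero_le)
  then show ?thesis
    unfolding vconj_def by (simp add: sf_le_inverse_iff vmmult_def ssum_mult_right ssum_le_iff Ball_def)
qed

section \<open>The substitution \<open>y = x\<^sup>c\<close>\<close>

lemma dev_le_iff:
  fixes P :: "nat \<Rightarrow> nat \<Rightarrow> 'a::idem_semifield"
  assumes P: "\<forall>i<n. P i j \<noteq> 0" and x: "regular n x" and K: "K \<noteq> 0"
  shows "dev n P j x \<le> K \<longleftrightarrow> (\<forall>i<n. inverse K * P i j \<le> x i \<and> x i \<le> K * P i j)"
proof -
  have "inverse (P i j) * x i \<le> K \<longleftrightarrow> x i \<le> K * P i j" if "i < n" for i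
    using sf_mult_le_iff_le_inverse_mult[OF sf_inverse_nonzero, of "P i j" "x i" K] P that
    by (simp add: mult.commute)
  moreover have "inverse (x i) * P i j \<le> K \<longleftrightarrow> inverse K * P i j \<le> x i" if "i < n" for i
    using sf_mult_le_iff_le_inverse_mult[OF sf_inverse_nonzero, of "x i" "P i j" K]
      sf_le_mult_iff_inverse_mult_le[OF K, of "P i j" "x i"] x that
    by (simp add: regular_def mult.commute)
  ultimately show ?thesis
    unfolding dev_def dotp_def using P x by (auto simp: ssum_le_iff vconj_def regular_def)
qed

text \<open>The exponent \<open>-\<bar>c\<bar>\<close> gives the bounds on \<open>x\<^sup>c\<close> the same form for both signs of \<open>c\<close>.\<close>

lemma two_sided_bound_rpw_iff:
  fixes x p K :: "'a::idem_semifield"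
  assumes x: "x \<noteq> 0" and p: "p \<noteq> 0" and K: "K \<noteq> 0" and c: "c \<noteq> 0"
  shows "(inverse K * p \<le> x \<and> x \<le> K * p) \<longleftrightarrow>
    rpw K (-\<bar>c\<bar>) * rpw p c \<le> rpw x c \<and> rpw K (-\<bar>c\<bar>) * rpw p (-c) * rpw x c \<le> 1"
proof -
  have "rpw K (-\<bar>c\<bar>) * rpw p (-c) = inverse (rpw K \<bar>c\<bar> * rpw p c)"
    using K p by (simp add: sf_inverse_mult rpw_nonzero rpw_minus)
  then have "inverse (rpw K (-\<bar>c\<bar>) * rpw p (-c)) = rpw K \<bar>c\<bar> * rpw p c"
    using K p by (simp add: rpw_nonzero)
  then have upper: "rpw K (-\<bar>c\<bar>) * rpw p (-c) * rpw x c \<le> 1 \<longleftrightarrow> rpw x c \<le> rpw K \<bar>c\<bar> * rpw p c"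
    using sf_le_inverse_iff[of "rpw K (-\<bar>c\<bar>) * rpw p (-c)" "rpw x c"] K p by (simp add: rpw_nonzero)
  have lo: "rpw (inverse K * p) c = rpw K (-c) * rpw p c"
    using K p by (simp add: rpw_mult_base sf_inverse_nonzero rpw_inverse rpw_minus)
  have hi: "rpw (K * p) c = rpw K c * rpw p c"
    using K p by (simp add: rpw_mult_base)
  show ?thesis
  proof (cases "c > 0")
    case True
    then show ?thesis
      unfolding upper using rpw_le_rpw_iff[OF True, of "inverse K * p" x] rpw_le_rpw_iff[OF True, of x "K * p"]
      by (simp add: lo hi)
  next
    case False
    with c have "c < 0" by simp
    then show ?thesis
      unfolding upper using rpw_le_rpw_iff_neg[OF \<open>c < 0\<close>, of x "inverse K * p"]
        rpw_le_rpw_iff_neg[OF \<open>c < 0\<close>, of "K * p" x] K p x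
      by (auto simp: lo hi sf_inverse_nonzero)
  qed
qed

lemma dev_le_iff_rpw_bounds:
  fixes P :: "nat \<Rightarrow> nat \<Rightarrow> 'a::idem_semifield"
  assumes P: "\<forall>i<n. P i j \<noteq> 0" and x: "regular n x" and K: "K \<noteq> 0" and c: "\<forall>i<n. c i \<noteq> 0"
  shows "dev n P j x \<le> K \<longleftrightarrow>
    (\<forall>i<n. rpw K (-\<bar>c i\<bar>) * rpw (P i j) (c i) \<le> rpw (x i) (c i)
         \<and> rpw K (-\<bar>c i\<bar>) * rpw (P i j) (- c i) * rpw (x i) (c i) \<le> 1)"
proof -
  have "(inverse K * P i j \<le> x i \<and> x i \<le> K * P i j) \<longleftrightarrow>
      rpw K (-\<bar>c i\<bar>) * rpw (P i j) (c i) \<le> rpw (x i) (c i)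
      \<and> rpw K (-\<bar>c i\<bar>) * rpw (P i j) (- c i) * rpw (x i) (c i) \<le> 1" if "i < n" for i
    using two_sided_bound_rpw_iff[OF _ _ K] P x c that by (simp add: regular_def)
  then show ?thesis using dev_le_iff[of n P j x K] P x K by simp
qed

lemma interval_rpw_iff:
  fixes x f g :: "'a::idem_semifield"
  assumes x: "x \<noteq> 0" and f: "f \<noteq> 0" and g: "g \<noteq> 0" and "f \<le> g" and c: "c \<noteq> 0"
  shows "(f \<le> x \<and> x \<le> g) \<longleftrightarrow>
    inverse (max (rpw f (-c)) (rpw g (-c))) \<le> rpw x c \<and> inverse (max (rpw f c) (rpw g c)) * rpw x c \<le> 1"
proof (cases "c > 0")
  case True
  have "rpw g (-c) \<le> rpw f (-c)" "rpw f c \<le> rpw g c"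
    using rpw_le_rpw_iff_neg[of "-c" g f] rpw_mono[OF True \<open>f \<le> g\<close>] True f g \<open>f \<le> g\<close> by auto
  moreover have "inverse (rpw g c) * rpw x c \<le> 1 \<longleftrightarrow> rpw x c \<le> rpw g c"
    using sf_le_inverse_iff[of "inverse (rpw g c)" "rpw x c"] rpw_nonzero[OF g, of c]
    by (simp add: sf_inverse_nonzero)
  ultimately show ?thesis
    using True f by (simp add: max_def rpw_minus rpw_nonzero rpw_le_rpw_iff)
next
  case False
  with c have "c < 0" by simp
  have "rpw f (-c) \<le> rpw g (-c)" "rpw g c \<le> rpw f c"
    using rpw_mono[of "-c", OF _ \<open>f \<le> g\<close>] rpw_le_rpw_iff_neg[of c g f] \<open>c < 0\<close> f g \<open>f \<le> g\<close> by auto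
  moreover have "inverse (rpw f c) * rpw x c \<le> 1 \<longleftrightarrow> rpw x c \<le> rpw f c"
    using sf_le_inverse_iff[of "inverse (rpw f c)" "rpw x c"] rpw_nonzero[OF f, of c]
    by (simp add: sf_inverse_nonzero)
  moreover have "rpw x c \<le> rpw f c \<longleftrightarrow> f \<le> x" "rpw g c \<le> rpw x c \<longleftrightarrow> x \<le> g"
    using rpw_le_rpw_iff_neg[OF \<open>c < 0\<close>] x f g by auto
  ultimately show ?thesis
    using g by (auto simp: max_def rpw_minus rpw_nonzero)
qed

lemma weighted_power_le_iff:
  fixes h \<theta> Y :: "'a::idem_semifield"
  assumes h: "h \<noteq> 0" and \<theta>: "\<theta> \<noteq> 0" and u: "u > 0" and \<alpha>: "\<alpha> > 0"
  shows "h * rpw Y (u / \<alpha>) \<le> \<theta> \<longleftrightarrow> rpw \<theta> (- \<alpha> / u) * rpw h (\<alpha> / u) * Y \<le> 1"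
proof -
  define Z where "Z = inverse h * \<theta>"
  have Z: "Z \<noteq> 0" unfolding Z_def using h \<theta> by (simp add: sf_inverse_nonzero)
  have "h * rpw Y (u / \<alpha>) \<le> \<theta> \<longleftrightarrow> rpw Y (u / \<alpha>) \<le> rpw (rpw Z (\<alpha> / u)) (u / \<alpha>)"
    using sf_mult_le_iff_le_inverse_mult[OF h] Z u \<alpha> by (simp add: Z_def rpw_rpw rpw_one)
  also have "\<dots> \<longleftrightarrow> Y \<le> rpw Z (\<alpha> / u)"
    using u \<alpha> by (simp add: rpw_le_rpw_iff)
  also have "\<dots> \<longleftrightarrow> rpw Z (- (\<alpha> / u)) * Y \<le> 1"
    using sf_le_iff_inverse_mult_le_one[OF rpw_nonzero[OF Z]] Z by (simp add: rpw_minus)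
  finally show ?thesis
    unfolding Z_def using rpw_inverse_mult_minus[OF h \<theta>, of "\<alpha> / u"] by simp
qed

lemma weighted_geometric_mean_le_iff:
  fixes hj hl \<theta> Z :: "'a::idem_semifield"
  assumes hj: "hj \<noteq> 0" and hl: "hl \<noteq> 0" and \<theta>: "\<theta> \<noteq> 0" and u: "u > 0" and v: "v > 0"
    and \<alpha>: "\<alpha> > 0" and \<beta>: "\<beta> > 0"
  shows "rpw hj (\<alpha> * v / (\<alpha> * v + \<beta> * u)) * rpw hl (\<beta> * u / (\<alpha> * v + \<beta> * u))
           * rpw Z (u * v / (\<alpha> * v + \<beta> * u)) \<le> \<theta>
     \<longleftrightarrow> rpw \<theta> (- \<alpha> / u) * rpw hj (\<alpha> / u) * Z * (rpw \<theta> (- \<beta> / v) * rpw hl (\<beta> / v)) \<le> 1"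
proof -
  define D where "D = \<alpha> * v + \<beta> * u"
  have D: "D > 0" unfolding D_def using \<alpha> \<beta> u v by (simp add: add_pos_pos)
  define e where "e = u * v / D"
  have e: "e > 0" "1 / e > 0" unfolding e_def using D u v by auto
  have ae: "\<alpha> * v / (D * e) = \<alpha> / u" and be: "\<beta> * u / (D * e) = \<beta> / v"
    unfolding e_def using D u v by (simp_all add: field_simps)
  have ee: "e * (1 / e) = 1" using e by simp
  \<comment> \<open>raising both sides to the power \<open>1 / e = \<alpha> / u + \<beta> / v\<close> separates the two factors\<close>
  have ie: "1 / e = \<alpha> / u + \<beta> / v"
    unfolding e_def D_def using u v by (simp add: field_simps)
  have "rpw hj (\<alpha> * v / D) * rpw hl (\<beta> * u / D) * rpw Z e \<le> \<theta> \<longleftrightarrow>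
        rpw (rpw hj (\<alpha> * v / D) * rpw hl (\<beta> * u / D) * rpw Z e) (1 / e) \<le> rpw \<theta> (1 / e)"
    using rpw_le_rpw_iff[OF e(2)] by blast
  also have "rpw (rpw hj (\<alpha> * v / D) * rpw hl (\<beta> * u / D) * rpw Z e) (1 / e)
      = rpw hj (\<alpha> / u) * rpw hl (\<beta> / v) * Z"
    using e hj hl by (simp add: rpw_mult_pos rpw_rpw rpw_rpw_pos ae be ee rpw_one)
  also have "rpw \<theta> (1 / e) = rpw \<theta> (\<alpha> / u) * rpw \<theta> (\<beta> / v)"
    unfolding ie using \<theta> by (simp add: rpw_add)
  also have "rpw hj (\<alpha> / u) * rpw hl (\<beta> / v) * Z \<le> rpw \<theta> (\<alpha> / u) * rpw \<theta> (\<beta> / v)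
      \<longleftrightarrow> inverse (rpw \<theta> (\<alpha> / u) * rpw \<theta> (\<beta> / v)) * (rpw hj (\<alpha> / u) * rpw hl (\<beta> / v) * Z) \<le> 1"
    using \<theta> by (intro sf_le_iff_inverse_mult_le_one) (simp add: rpw_nonzero)
  also have "inverse (rpw \<theta> (\<alpha> / u) * rpw \<theta> (\<beta> / v)) = rpw \<theta> (- \<alpha> / u) * rpw \<theta> (- \<beta> / v)"
    using \<theta> by (simp add: sf_inverse_mult rpw_nonzero rpw_minus[symmetric])
  finally show ?thesis unfolding e_def D_def by (simp add: ac_simps)
qed

section \<open>The optimization problem\<close>

locale minimax_problem =
  fixes n m :: nat
    and P :: "nat \<Rightarrow> nat \<Rightarrow> 'a::idem_semifield"
    and w c :: "nat \<Rightarrow> real"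
    and h d f g s t :: "nat \<Rightarrow> 'a"
    and B :: "nat \<Rightarrow> nat \<Rightarrow> 'a"
    and \<theta> :: 'a
  assumes n_pos: "n \<ge> 1" and m_pos: "m \<ge> 1"
    and P_nonzero: "\<forall>i<n. \<forall>j<m. P i j \<noteq> 0"
    and w_pos: "\<forall>j<m. w j > 0"
    and h_d_nonzero: "\<forall>j<m. h j \<noteq> 0 \<and> d j \<noteq> 0"
    and c_nonzero: "\<forall>i<n. c i \<noteq> 0"
    and f_regular: "regular n f" and g_regular: "regular n g" and f_le_g: "\<forall>i<n. f i \<le> g i"
    and s_def: "\<forall>i. s i = max (ssum (\<lambda>j. rpw (d j) (- \<bar>c i\<bar>) * rpw (P i j) (c i)) {..<m})
                     (inverse (max (rpw (f i) (- c i)) (rpw (g i) (- c i))))"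
    and t_def: "\<forall>i. t i = inverse (max (ssum (\<lambda>j. rpw (d j) (- \<bar>c i\<bar>) * rpw (P i j) (- c i)) {..<m})
                     (inverse (max (rpw (f i) (c i)) (rpw (g i) (c i)))))"
    and Tr_B: "Tr n B \<le> 1"
    and t_kstar_s: "dotp n (vmmult n (vconj t) (kstar n B)) s \<le> 1"
    and theta_def: "\<theta> = ssum (\<lambda>(i, k). ssum (\<lambda>(j, l).
           max (max
             (rpw (h j) (\<bar>c i\<bar> * w l / (\<bar>c i\<bar> * w l + \<bar>c k\<bar> * w j))
              * rpw (h l) (\<bar>c k\<bar> * w j / (\<bar>c i\<bar> * w l + \<bar>c k\<bar> * w j))
              * rpw (rpw (P i j) (- c i) * kstar n B i k * rpw (P k l) (c k))
                    (w j * w l / (\<bar>c i\<bar> * w l + \<bar>c k\<bar> * w j)))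
             (h j * rpw (rpw (P i j) (- c i) * kstar n B i k * s k) (w j / \<bar>c i\<bar>)))
             (h l * rpw (inverse (t i) * kstar n B i k * rpw (P k l) (c k)) (w l / \<bar>c k\<bar>)))
         ({..<m} \<times> {..<m})) ({..<n} \<times> {..<n})"
begin

text \<open>In the notation of the paper, \<open>tinv i = t\<^sub>i\<^sup>-\<^sup>1\<close>, and at level \<open>\<theta>' = \<theta>\<close> the sums of
  \<open>qterm \<theta>' i\<close> and \<open>rterm \<theta>' i\<close> over \<open>j\<close> are \<open>q\<^sub>i\<close> and \<open>r\<^sub>i\<^sup>-\<^sup>1\<close>.\<close>

definition yvec :: "(nat \<Rightarrow> 'a) \<Rightarrow> nat \<Rightarrow> 'a"
  where "yvec x i = rpw (x i) (c i)"

definition tinv :: "nat \<Rightarrow> 'a"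
  where "tinv i = max (ssum (\<lambda>j. rpw (d j) (- \<bar>c i\<bar>) * rpw (P i j) (- c i)) {..<m})
                     (inverse (max (rpw (f i) (c i)) (rpw (g i) (c i))))"

definition qterm :: "'a \<Rightarrow> nat \<Rightarrow> nat \<Rightarrow> 'a"
  where "qterm \<theta>' i j = rpw \<theta>' (- \<bar>c i\<bar> / w j) * rpw (h j) (\<bar>c i\<bar> / w j) * rpw (P i j) (c i)"

definition rterm :: "'a \<Rightarrow> nat \<Rightarrow> nat \<Rightarrow> 'a"
  where "rterm \<theta>' i j = rpw \<theta>' (- \<bar>c i\<bar> / w j) * rpw (h j) (\<bar>c i\<bar> / w j) * rpw (P i j) (- c i)"

definition lower :: "'a \<Rightarrow> nat \<Rightarrow> 'a"
  where "lower \<theta>' i = max (ssum (qterm \<theta>' i) {..<m}) (s i)"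

definition upper :: "'a \<Rightarrow> nat \<Rightarrow> 'a"
  where "upper \<theta>' i = max (ssum (rterm \<theta>' i) {..<m}) (tinv i)"

lemma s_nonzero: "i < n \<Longrightarrow> s i \<noteq> 0"
  using s_def f_regular by (simp add: regular_def rpw_nonzero sf_inverse_nonzero)

lemma tinv_nonzero: "i < n \<Longrightarrow> tinv i \<noteq> 0"
  using f_regular by (simp add: tinv_def regular_def rpw_nonzero sf_inverse_nonzero)

lemma t_eq: "t i = inverse (tinv i)"
  using t_def by (simp add: tinv_def)

lemma inverse_t: "i < n \<Longrightarrow> inverse (t i) = tinv i"
  using tinv_nonzero by (simp add: t_eq)

lemma vconj_t: "i < n \<Longrightarrow> vconj t i = tinv i"
  using tinv_nonzero by (simp add: vconj_def t_eq sf_inverse_nonzero)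

lemma ssum_rterm_nonzero:
  assumes "\<theta>' \<noteq> 0" and "i < n"
  shows "ssum (rterm \<theta>' i) {..<m} \<noteq> 0"
proof (rule ssum_nonzero)
  show "0 \<in> {..<m}" using m_pos by simp
  show "rterm \<theta>' i 0 \<noteq> 0"
    using assms m_pos P_nonzero h_d_nonzero by (simp add: rterm_def rpw_nonzero)
qed simp

lemma upper_nonzero: "i < n \<Longrightarrow> upper \<theta>' i \<noteq> 0"
  by (simp add: upper_def tinv_nonzero)

lemma lower_nonzero: "i < n \<Longrightarrow> lower \<theta>' i \<noteq> 0"
  by (simp add: lower_def s_nonzero)

lemma tinv_kstar_s: "i < n \<Longrightarrow> k < n \<Longrightarrow> tinv i * kstar n B i k * s k \<le> 1"
  using t_kstar_s vconj_t
  by (simp add: dotp_def vmmult_def ssum_le_iff ssum_mult_right Ball_def)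

lemma feasible_iff:
  "feasible n m P d c B f g x \<longleftrightarrow> regular n x \<and> (\<forall>i<n. \<forall>k<n. B i k * yvec x k \<le> yvec x i)
     \<and> (\<forall>i<n. s i \<le> yvec x i \<and> tinv i * yvec x i \<le> 1)"
proof (cases "regular n x")
  case True
  have dev: "(\<forall>j<m. dev n P j x \<le> d j) \<longleftrightarrow>
      (\<forall>j<m. \<forall>i<n. rpw (d j) (-\<bar>c i\<bar>) * rpw (P i j) (c i) \<le> yvec x i
         \<and> rpw (d j) (-\<bar>c i\<bar>) * rpw (P i j) (- c i) * yvec x i \<le> 1)"
    using dev_le_iff_rpw_bounds[OF _ True _ c_nonzero] P_nonzero h_d_nonzero
    by (simp add: yvec_def)
  have box: "(\<forall>i<n. f i \<le> x i \<and> x i \<le> g i) \<longleftrightarrow>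
      (\<forall>i<n. inverse (max (rpw (f i) (- c i)) (rpw (g i) (- c i))) \<le> yvec x i
         \<and> inverse (max (rpw (f i) (c i)) (rpw (g i) (c i))) * yvec x i \<le> 1)"
  proof -
    have "(f i \<le> x i \<and> x i \<le> g i) \<longleftrightarrow>
        inverse (max (rpw (f i) (- c i)) (rpw (g i) (- c i))) \<le> yvec x i
        \<and> inverse (max (rpw (f i) (c i)) (rpw (g i) (c i))) * yvec x i \<le> 1" if "i < n" for i
      unfolding yvec_def
      by (rule interval_rpw_iff) (use True f_regular g_regular f_le_g c_nonzero that in \<open>auto simp: regular_def\<close>)
    then show ?thesis by simp
  qed
  have s: "s i \<le> yvec x i \<longleftrightarrow> (\<forall>j<m. rpw (d j) (-\<bar>c i\<bar>) * rpw (P i j) (c i) \<le> yvec x i)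
      \<and> inverse (max (rpw (f i) (- c i)) (rpw (g i) (- c i))) \<le> yvec x i" for i
    using s_def by (simp add: ssum_le_iff Ball_def)
  have t: "tinv i * yvec x i \<le> 1 \<longleftrightarrow> (\<forall>j<m. rpw (d j) (-\<bar>c i\<bar>) * rpw (P i j) (- c i) * yvec x i \<le> 1)
      \<and> inverse (max (rpw (f i) (c i)) (rpw (g i) (c i))) * yvec x i \<le> 1" for i
    by (simp add: tinv_def sf_max_mult_distrib ssum_mult_right ssum_le_iff Ball_def)
  show ?thesis
    unfolding feasible_def s t using True dev box by (auto simp: yvec_def)
qed (simp add: feasible_def)

lemma objective_term_le_iff:
  assumes x: "regular n x" and \<theta>': "\<theta>' \<noteq> 0" and j: "j < m"
  shows "h j * rpw (dev n P j x) (w j) \<le> \<theta>' \<longleftrightarrow>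
    (\<forall>i<n. qterm \<theta>' i j \<le> yvec x i \<and> rterm \<theta>' i j * yvec x i \<le> 1)"
proof -
  have h: "h j \<noteq> 0" and w: "w j > 0" using h_d_nonzero w_pos j by auto
  define Z where "Z = inverse (h j) * \<theta>'"
  define K where "K = rpw Z (1 / w j)"
  have Z: "Z \<noteq> 0" using h \<theta>' by (simp add: Z_def sf_inverse_nonzero)
  then have K: "K \<noteq> 0" by (simp add: K_def rpw_nonzero)
  have "rpw K (- \<bar>c i\<bar>) = rpw \<theta>' (- \<bar>c i\<bar> / w j) * rpw (h j) (\<bar>c i\<bar> / w j)" for i
    using rpw_inverse_mult_minus[OF h \<theta>', of "\<bar>c i\<bar> / w j"] Z by (simp add: K_def Z_def rpw_rpw)
  then have bounds: "(\<forall>i<n. rpw K (-\<bar>c i\<bar>) * rpw (P i j) (c i) \<le> rpw (x i) (c i)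
         \<and> rpw K (-\<bar>c i\<bar>) * rpw (P i j) (- c i) * rpw (x i) (c i) \<le> 1) \<longleftrightarrow>
      (\<forall>i<n. qterm \<theta>' i j \<le> yvec x i \<and> rterm \<theta>' i j * yvec x i \<le> 1)"
    by (simp add: qterm_def rterm_def yvec_def)
  have "h j * rpw (dev n P j x) (w j) \<le> \<theta>' \<longleftrightarrow> rpw (dev n P j x) (w j) \<le> rpw K (w j)"
    using sf_mult_le_iff_le_inverse_mult[OF h] Z w by (simp add: K_def Z_def rpw_rpw rpw_one)
  also have "\<dots> \<longleftrightarrow> dev n P j x \<le> K" using rpw_le_rpw_iff[OF w] .
  also have "\<dots> \<longleftrightarrow> (\<forall>i<n. qterm \<theta>' i j \<le> yvec x i \<and> rterm \<theta>' i j * yvec x i \<le> 1)"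
    unfolding bounds[symmetric] using P_nonzero j x K c_nonzero by (intro dev_le_iff_rpw_bounds) auto
  finally show ?thesis .
qed

lemma objective_le_iff:
  assumes "regular n x" and "\<theta>' \<noteq> 0"
  shows "objective n m P w h x \<le> \<theta>' \<longleftrightarrow>
    (\<forall>i<n. ssum (qterm \<theta>' i) {..<m} \<le> yvec x i \<and> ssum (rterm \<theta>' i) {..<m} * yvec x i \<le> 1)"
  using objective_term_le_iff[OF assms]
  by (simp add: objective_def ssum_le_iff ssum_mult_right Ball_def) blast

lemma objective_nonzero:
  assumes x: "regular n x"
  shows "objective n m P w h x \<noteq> 0"
proof -
  have P00: "P 0 0 \<noteq> 0" and x0: "x 0 \<noteq> 0"
    using P_nonzero n_pos m_pos x by (auto simp: regular_def)
  have "inverse (P 0 0) * x 0 = vconj (\<lambda>i. P i 0) 0 * x 0"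
    using P00 by (simp add: vconj_def)
  also have "\<dots> \<le> dotp n (vconj (\<lambda>i. P i 0)) x"
    unfolding dotp_def using n_pos by (intro ssum_upper) auto
  also have "\<dots> \<le> dev n P 0 x" unfolding dev_def by (rule max.cobounded1)
  finally have "dev n P 0 x \<noteq> 0"
    using P00 x0 by (auto simp: sf_inverse_nonzero)
  then have "h 0 * rpw (dev n P 0 x) (w 0) \<noteq> 0"
    using h_d_nonzero m_pos by (simp add: rpw_nonzero)
  then show ?thesis
    unfolding objective_def using m_pos by (intro ssum_nonzero[of _ 0]) auto
qed

lemma feasible_objective_le_iff:
  assumes "\<theta>' \<noteq> 0"
  shows "feasible n m P d c B f g x \<and> objective n m P w h x \<le> \<theta>' \<longleftrightarrow>
    regular n x \<and> (\<forall>i<n. \<forall>k<n. B i k * yvec x k \<le> yvec x i)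
    \<and> (\<forall>i<n. lower \<theta>' i \<le> yvec x i \<and> upper \<theta>' i * yvec x i \<le> 1)"
  using feasible_iff objective_le_iff[OF _ assms]
  by (auto simp: lower_def upper_def sf_max_mult_distrib)

definition theta_obj_obj :: "nat \<Rightarrow> nat \<Rightarrow> nat \<Rightarrow> nat \<Rightarrow> 'a"
  where "theta_obj_obj i k j l =
    rpw (h j) (\<bar>c i\<bar> * w l / (\<bar>c i\<bar> * w l + \<bar>c k\<bar> * w j))
    * rpw (h l) (\<bar>c k\<bar> * w j / (\<bar>c i\<bar> * w l + \<bar>c k\<bar> * w j))
    * rpw (rpw (P i j) (- c i) * kstar n B i k * rpw (P k l) (c k))
          (w j * w l / (\<bar>c i\<bar> * w l + \<bar>c k\<bar> * w j))"

definition theta_obj_s :: "nat \<Rightarrow> nat \<Rightarrow> nat \<Rightarrow> 'a"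
  where "theta_obj_s i k j = h j * rpw (rpw (P i j) (- c i) * kstar n B i k * s k) (w j / \<bar>c i\<bar>)"

definition theta_t_obj :: "nat \<Rightarrow> nat \<Rightarrow> nat \<Rightarrow> 'a"
  where "theta_t_obj i k l = h l * rpw (inverse (t i) * kstar n B i k * rpw (P k l) (c k)) (w l / \<bar>c k\<bar>)"

lemma theta_le_iff_terms:
  "\<theta> \<le> z \<longleftrightarrow> (\<forall>i<n. \<forall>k<n. \<forall>j<m. \<forall>l<m.
     theta_obj_obj i k j l \<le> z \<and> theta_obj_s i k j \<le> z \<and> theta_t_obj i k l \<le> z)"
  unfolding theta_def theta_obj_obj_def theta_obj_s_def theta_t_obj_def
  by (simp add: ssum_le_iff) (auto 0 0)

lemma theta_le_iff:
  assumes \<theta>': "\<theta>' \<noteq> 0"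
  shows "\<theta> \<le> \<theta>' \<longleftrightarrow> (\<forall>i<n. \<forall>k<n. upper \<theta>' i * kstar n B i k * lower \<theta>' k \<le> 1)"
proof -
  have hw: "h j \<noteq> 0" "w j > 0" if "j < m" for j using h_d_nonzero w_pos that by auto
  have c: "\<bar>c i\<bar> > 0" if "i < n" for i using c_nonzero that by simp
  have obj_obj: "theta_obj_obj i k j l \<le> \<theta>' \<longleftrightarrow> rterm \<theta>' i j * kstar n B i k * qterm \<theta>' k l \<le> 1"
    if "i < n" "k < n" "j < m" "l < m" for i k j l
    unfolding theta_obj_obj_def
    using weighted_geometric_mean_le_iff[where Z = "rpw (P i j) (- c i) * kstar n B i k * rpw (P k l) (c k)",
        OF hw(1)[of j] hw(1)[of l] \<theta>' hw(2)[of j] hw(2)[of l] c[of i] c[of k]]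
      that by (simp add: rterm_def qterm_def ac_simps)
  have obj_s: "theta_obj_s i k j \<le> \<theta>' \<longleftrightarrow> rterm \<theta>' i j * kstar n B i k * s k \<le> 1"
    if "i < n" "j < m" for i k j
    unfolding theta_obj_s_def
    using weighted_power_le_iff[where Y = "rpw (P i j) (- c i) * kstar n B i k * s k",
        OF hw(1)[of j] \<theta>' hw(2)[of j] c[of i]] that
    by (simp add: rterm_def ac_simps)
  have t_obj: "theta_t_obj i k l \<le> \<theta>' \<longleftrightarrow> tinv i * kstar n B i k * qterm \<theta>' k l \<le> 1"
    if "i < n" "k < n" "l < m" for i k l
    unfolding theta_t_obj_def
    using weighted_power_le_iff[where Y = "tinv i * kstar n B i k * rpw (P k l) (c k)",
        OF hw(1)[of l] \<theta>' hw(2)[of l] c[of k]] that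
    by (simp add: inverse_t qterm_def ac_simps)
  have bound: "upper \<theta>' i * kstar n B i k * lower \<theta>' k \<le> 1 \<longleftrightarrow>
      (\<forall>j<m. \<forall>l<m. rterm \<theta>' i j * kstar n B i k * qterm \<theta>' k l \<le> 1)
      \<and> (\<forall>j<m. rterm \<theta>' i j * kstar n B i k * s k \<le> 1)
      \<and> (\<forall>l<m. tinv i * kstar n B i k * qterm \<theta>' k l \<le> 1)
      \<and> tinv i * kstar n B i k * s k \<le> 1" for i k
    unfolding upper_def lower_def
    by (simp add: sf_max_mult_distrib sf_distrib ssum_mult_left ssum_mult_right ssum_le_iff Ball_def)
      blast
  show ?thesis
    unfolding theta_le_iff_terms bound using obj_obj obj_s t_obj tinv_kstar_s m_pos by auto
qed

lemma theta_nonzero: "\<theta> \<noteq> 0"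
proof -
  have "theta_obj_s 0 0 0 \<le> \<theta>"
  proof -
    have "0 < n" "0 < m" using n_pos m_pos by auto
    then show ?thesis using theta_le_iff_terms[of \<theta>] by blast
  qed
  moreover have "kstar n B 0 0 \<noteq> 0"
    using one_le_kstar_diag[of 0 n B] n_pos sf_nonzero_le by force
  then have "rpw (P 0 0) (- c 0) * kstar n B 0 0 * s 0 \<noteq> 0"
    using n_pos m_pos P_nonzero s_nonzero[of 0] by (simp add: rpw_nonzero)
  then have "theta_obj_s 0 0 0 \<noteq> 0"
    using m_pos h_d_nonzero by (simp add: theta_obj_s_def rpw_nonzero)
  ultimately show ?thesis by (rule sf_nonzero_le)
qed

lemma theta_le_objective:
  assumes x: "feasible n m P d c B f g x"
  shows "\<theta> \<le> objective n m P w h x"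
proof -
  define \<theta>' where "\<theta>' = objective n m P w h x"
  have "\<theta>' \<noteq> 0" using x objective_nonzero feasible_iff by (auto simp: \<theta>'_def)
  moreover have "feasible n m P d c B f g x \<and> objective n m P w h x \<le> \<theta>'"
    using x by (simp add: \<theta>'_def)
  then have "(\<forall>i<n. \<forall>k<n. B i k * yvec x k \<le> yvec x i)
      \<and> (\<forall>i<n. lower \<theta>' i \<le> yvec x i \<and> upper \<theta>' i * yvec x i \<le> 1)"
    using feasible_objective_le_iff[OF \<open>\<theta>' \<noteq> 0\<close>] by blast
  then have "\<forall>i<n. \<forall>k<n. upper \<theta>' i * kstar n B i k * lower \<theta>' k \<le> 1"
    using subeigen_bounds_imp_kstar_le_one[of n B "yvec x" "lower \<theta>'" "upper \<theta>'"] by blast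
  ultimately show ?thesis
    unfolding \<theta>'_def[symmetric] using theta_le_iff by blast
qed

lemma optimal_iff:
  "feasible n m P d c B f g x \<and> objective n m P w h x = \<theta> \<longleftrightarrow>
    regular n x \<and> (\<forall>i<n. \<forall>k<n. B i k * yvec x k \<le> yvec x i)
    \<and> (\<forall>i<n. lower \<theta> i \<le> yvec x i \<and> upper \<theta> i * yvec x i \<le> 1)"
proof -
  have "feasible n m P d c B f g x \<and> objective n m P w h x = \<theta> \<longleftrightarrow>
      feasible n m P d c B f g x \<and> objective n m P w h x \<le> \<theta>"
    using theta_le_objective[of x] by (auto simp: order.eq_iff)
  then show ?thesis using feasible_objective_le_iff[OF theta_nonzero] by simp
qed

lemma optimal_iff_parametrized:
  "feasible n m P d c B f g x \<and> objective n m P w h x = \<theta> \<longleftrightarrow>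
    (\<exists>v. (\<forall>i<n. lower \<theta> i \<le> v i \<and> (\<forall>k<n. upper \<theta> k * kstar n B k i * v i \<le> 1))
       \<and> (\<forall>i<n. x i = rpw (mvmult n (kstar n B) v i) (1 / c i)))"
  (is "_ \<longleftrightarrow> (\<exists>v. ?bounds v \<and> ?x v)")
proof
  assume "feasible n m P d c B f g x \<and> objective n m P w h x = \<theta>"
  then have x: "regular n x" and y: "(\<forall>i<n. \<forall>k<n. B i k * yvec x k \<le> yvec x i)
      \<and> (\<forall>i<n. lower \<theta> i \<le> yvec x i \<and> upper \<theta> i * yvec x i \<le> 1)"
    unfolding optimal_iff by blast+
  obtain v where v: "?bounds v" and yv: "\<forall>i<n. yvec x i = mvmult n (kstar n B) v i"
    using y unfolding subeigen_bounds_iff[OF Tr_B] by blast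
  have "x i = rpw (yvec x i) (1 / c i)" if "i < n" for i
    using rpw_eq_iff_inverse_exp[of "c i" "x i" "yvec x i"] x c_nonzero that
    by (simp add: yvec_def regular_def rpw_nonzero)
  with yv have "?x v" by simp
  with v show "\<exists>v. ?bounds v \<and> ?x v" by blast
next
  assume "\<exists>v. ?bounds v \<and> ?x v"
  then obtain v where v: "?bounds v" and x: "?x v" by blast
  define y where "y = mvmult n (kstar n B) v"
  have y: "(\<forall>i<n. \<forall>k<n. B i k * y k \<le> y i) \<and> (\<forall>i<n. lower \<theta> i \<le> y i \<and> upper \<theta> i * y i \<le> 1)"
    unfolding subeigen_bounds_iff[OF Tr_B] y_def using v by blast
  have "x i \<noteq> 0 \<and> yvec x i = y i" if i: "i < n" for i
  proof -
    have "y i \<noteq> 0" using y lower_nonzero[OF i, of \<theta>] i sf_nonzero_le by blast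
    then show ?thesis
      using rpw_eq_iff_inverse_exp[of "c i" "x i" "y i"] x c_nonzero i
      by (auto simp: yvec_def y_def rpw_nonzero)
  qed
  then have "regular n x" and "\<forall>i<n. yvec x i = y i" by (simp_all add: regular_def)
  with y show "feasible n m P d c B f g x \<and> objective n m P w h x = \<theta>"
    unfolding optimal_iff by simp
qed

lemma optimum_attained: "\<exists>x. feasible n m P d c B f g x \<and> objective n m P w h x = \<theta>"
proof -
  have "\<forall>i<n. lower \<theta> i \<le> lower \<theta> i \<and> (\<forall>k<n. upper \<theta> k * kstar n B k i * lower \<theta> i \<le> 1)"
    using theta_le_iff[OF theta_nonzero] by simp
  then show ?thesis
    by (intro exI[of _ "\<lambda>i. rpw (mvmult n (kstar n B) (lower \<theta>) i) (1 / c i)"]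
        optimal_iff_parametrized[THEN iffD2] exI[of _ "lower \<theta>"]) simp
qed

lemma max_vconj_eq_upper:
  assumes "r k = inverse (ssum (rterm \<theta> k) {..<m})" and "k < n"
  shows "max (vconj r k) (vconj t k) = upper \<theta> k"
  using assms ssum_rterm_nonzero[OF theta_nonzero \<open>k < n\<close>] vconj_t[OF \<open>k < n\<close>]
  by (simp add: upper_def vconj_def sf_inverse_nonzero)

lemma le_vconj_vmmult_upper_iff:
  assumes "i < n" and "\<forall>k<n. u k = upper \<theta> k"
  shows "z \<le> vconj (vmmult n u (kstar n B)) i \<longleftrightarrow> (\<forall>k<n. upper \<theta> k * kstar n B k i * z \<le> 1)"
proof -
  have "vmmult n u (kstar n B) i = vmmult n (upper \<theta>) (kstar n B) i"
    unfolding vmmult_def using assms(2) by (intro ssum_cong) auto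
  then have "vconj (vmmult n u (kstar n B)) i = vconj (vmmult n (upper \<theta>) (kstar n B)) i"
    by (simp add: vconj_def)
  then show ?thesis
    using le_vconj_vmmult_kstar_iff[of i n "upper \<theta>" z B] assms(1) upper_nonzero[OF assms(1)] by simp
qed

end

theorem theorem3:
  fixes n m :: nat
    and P :: "nat \<Rightarrow> nat \<Rightarrow> 'a::idem_semifield"
    and w :: "nat \<Rightarrow> real" and c :: "nat \<Rightarrow> real"
    and h d f g :: "nat \<Rightarrow> 'a"
    and B :: "nat \<Rightarrow> nat \<Rightarrow> 'a"
    and s t q r :: "nat \<Rightarrow> 'a" and \<theta> :: 'a
  assumes "n \<ge> 1" and "m \<ge> 1"
    and "\<forall>i<n. \<forall>j<m. P i j \<noteq> 0"
    and "\<forall>j<m. w j > 0"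
    and "\<forall>j<m. h j \<noteq> 0 \<and> d j \<noteq> 0"
    and "\<forall>i<n. c i \<noteq> 0"
    and "regular n f" and "regular n g" and "\<forall>i<n. f i \<le> g i"
    and s_def: "\<forall>i. s i = max (ssum (\<lambda>j. rpw (d j) (- \<bar>c i\<bar>) * rpw (P i j) (c i)) {..<m})
                     (inverse (max (rpw (f i) (- c i)) (rpw (g i) (- c i))))"
    and t_def: "\<forall>i. t i = inverse (max (ssum (\<lambda>j. rpw (d j) (- \<bar>c i\<bar>) * rpw (P i j) (- c i)) {..<m})
                     (inverse (max (rpw (f i) (c i)) (rpw (g i) (c i)))))"
    and "Tr n B \<le> 1"
    and "dotp n (vmmult n (vconj t) (kstar n B)) s \<le> 1"
    and theta_def: "\<theta> = ssum (\<lambda>(i, k). ssum (\<lambda>(j, l).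
           max (max
             (rpw (h j) (\<bar>c i\<bar> * w l / (\<bar>c i\<bar> * w l + \<bar>c k\<bar> * w j))
              * rpw (h l) (\<bar>c k\<bar> * w j / (\<bar>c i\<bar> * w l + \<bar>c k\<bar> * w j))
              * rpw (rpw (P i j) (- c i) * kstar n B i k * rpw (P k l) (c k))
                    (w j * w l / (\<bar>c i\<bar> * w l + \<bar>c k\<bar> * w j)))
             (h j * rpw (rpw (P i j) (- c i) * kstar n B i k * s k) (w j / \<bar>c i\<bar>)))
             (h l * rpw (inverse (t i) * kstar n B i k * rpw (P k l) (c k)) (w l / \<bar>c k\<bar>)))
         ({..<m} \<times> {..<m})) ({..<n} \<times> {..<n})"
    and q_def: "\<forall>i. q i = ssum (\<lambda>j. rpw \<theta> (- \<bar>c i\<bar> / w j) * rpw (h j) (\<bar>c i\<bar> / w j)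
                     * rpw (P i j) (c i)) {..<m}"
    and r_def: "\<forall>i. r i = inverse (ssum (\<lambda>j. rpw \<theta> (- \<bar>c i\<bar> / w j) * rpw (h j) (\<bar>c i\<bar> / w j)
                     * rpw (P i j) (- c i)) {..<m})"
  shows "(\<exists>x. feasible n m P d c B f g x \<and> objective n m P w h x = \<theta>)
       \<and> (\<forall>x. feasible n m P d c B f g x \<longrightarrow> \<theta> \<le> objective n m P w h x)
       \<and> (\<forall>x. (feasible n m P d c B f g x \<and> objective n m P w h x = \<theta>) \<longleftrightarrow>
              (\<exists>v. (\<forall>i<n. max (q i) (s i) \<le> v i \<and>
                           v i \<le> vconj (vmmult n (\<lambda>k. max (vconj r k) (vconj t k)) (kstar n B)) i)
                 \<and> (\<forall>i<n. x i = rpw (mvmult n (kstar n B) v i) (1 / c i))))"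
proof -
  interpret minimax_problem n m P w c h d f g s t B \<theta>
    by (rule minimax_problem.intro) (fact assms)+
  have "r k = inverse (ssum (rterm \<theta> k) {..<m})" for k
    unfolding rterm_def using r_def by simp
  then have upper: "\<forall>k<n. max (vconj r k) (vconj t k) = upper \<theta> k"
    using max_vconj_eq_upper by blast
  have lower: "max (q i) (s i) = lower \<theta> i" for i
    unfolding lower_def qterm_def using q_def by simp
  have "\<forall>x. (feasible n m P d c B f g x \<and> objective n m P w h x = \<theta>) \<longleftrightarrow>
      (\<exists>v. (\<forall>i<n. max (q i) (s i) \<le> v i \<and>
               v i \<le> vconj (vmmult n (\<lambda>k. max (vconj r k) (vconj t k)) (kstar n B)) i)
         \<and> (\<forall>i<n. x i = rpw (mvmult n (kstar n B) v i) (1 / c i)))"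
    using optimal_iff_parametrized le_vconj_vmmult_upper_iff[OF _ upper] by (simp add: lower)
  with optimum_attained theta_le_objective show ?thesis by blast
qed

end
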